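(* In the setting below, for every $\ell\ge1$, $$\operatorname{rank}(q_\ell\otimes k)=\binom{n+\ell-1}{\ell}\binom{m-n}{\ell},$$ with the convention $\binom{a}{b}=0$ if $b>a$ (so $q_\ell\otimes k=0$ for $\ell\ge m-n+1$).
   Context: Setting: $R=k[x_{ij}\mid1\le i\le n,1\le j\le m]$ over a field $k$, $n\le m$; $F$ free with basis $f_1,\dots,f_m$, $G$ free with basis $g_1,\dots,g_n$, dual basis $g_i^*$; $D_\ell(G^* )$ the divided power with basis $g^{*(\alpha)}=g_1^{*(\alpha_1)}\cdots g_n^{*(\alpha_n)}$, $|\alpha|=\ell$. Fix $\sigma=(\sigma_1<\dots<\sigma_n)\subseteq[m]$, $f_\sigma=f_{\sigma_1}\wedge\cdots\wedge f_{\sigma_n}$. $U$ is free with basis $e_{ij}$, $1\le i\le n$, $j\notin\sigma$, $e_{(i,j)}=e_{ij}$. For $\tau=(\tau_1<\dots<\tau_\ell)$ and $\alpha\in\mathbb Z^n_{\ge 0}$, $\mathcal L_{\alpha,\tau}$ is the set of sets $L=\{(r_1,\tau_1),\dots,(r_\ell,\tau_\ell)\}$ with $r_s\in\{i:\alpha_i\neq 0\}$ and $|\{s:r_s=j\}|=\alpha_j$ for all $j$, written $L=(L_1,\dots,L_\ell)$, $L_s=(r_s,\tau_s)$. The map $q_\ell:D_\ell(G^* )\otimes\bigwedge^{n+\ell}F\to\bigwedge^\ell U$ sends $g^{*(\alpha)}\otimes f_{\tau_1}\wedge\cdots\wedge f_{\tau_\ell}\wedge f_\sigma\mapsto\sum_{L\in\mathcal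 L_{\alpha,\tau}}e_{L_1}\wedge\cdots\wedge e_{L_\ell}$ for $\tau\cap\sigma=\varnothing$, $|\alpha|=\ell$, and sends each basis element $g^{*(\alpha)}\otimes f_\rho$ with $\rho\not\supseteq\sigma$ to $0$. *)

theory Defs
  imports Complex_Main "HOL-Library.Function_Algebras"
begin

text \<open>Index set of the standard k-basis of D_l(G^*) (x) /\^(n+l) F:
  pairs (alpha, rho), alpha a multi-index supported on {1..n} with |alpha| = l
  (basis element g^{*(alpha)}), rho an (n+l)-subset of {1..m}.
  For rho containing sigma the corresponding basis vector is taken to be
  g^{*(alpha)} (x) f_tau /\ f_sigma with tau = rho - sigma (this differs from
  g^{*(alpha)} (x) f_rho only by a sign), otherwise g^{*(alpha)} (x) f_rho.\<close>
definition dom_index :: "nat \<Rightarrow> nat \<Rightarrow> nat \<Rightarrow> ((nat \<Rightarrow> nat) \<times> nat set) set" where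
  "dom_index n m l = {(\<alpha>, \<rho>). (\<forall>i. \<alpha> i \<noteq> 0 \<longrightarrow> i \<in> {1..n}) \<and> (\<Sum>i\<in>{1..n}. \<alpha> i) = l
                          \<and> \<rho> \<subseteq> {1..m} \<and> card \<rho> = n + l}"

definition L_set :: "(nat \<Rightarrow> nat) \<Rightarrow> nat set \<Rightarrow> (nat \<times> nat) set set" where
  "L_set \<alpha> \<tau> = {L. snd ` L \<subseteq> \<tau> \<and> (\<forall>j\<in>\<tau>. \<exists>!r. (r, j) \<in> L)
                   \<and> (\<forall>p\<in>L. \<alpha> (fst p) \<noteq> 0) \<and> (\<forall>i. card {j. (i, j) \<in> L} = \<alpha> i)}"

text \<open>Basis of /\^l U over k: l-subsets S of {1..n} x ({1..m} - sigma), where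
  e_S is the wedge of its elements listed in increasing order of the column
  index j (for fixed j, by increasing i).  With this ordering
  e_{L_1} /\ ... /\ e_{L_l} = e_L exactly, since tau_1 < ... < tau_l.
  q_col gives the image under q_l (x) k of a domain basis vector, as a
  coordinate vector (function from l-subsets to k).\<close>
definition q_col :: "nat set \<Rightarrow> (nat \<Rightarrow> nat) \<times> nat set \<Rightarrow> (nat \<times> nat) set \<Rightarrow> 'a::field" where
  "q_col \<sigma> c S = (if \<sigma> \<subseteq> snd c \<and> S \<in> L_set (fst c) (snd c - \<sigma>) then 1 else 0)"

definition col_rank :: "('i \<Rightarrow> 'r \<Rightarrow> 'a::field) \<Rightarrow> 'i set \<Rightarrow> nat" where
  "col_rank M I = vector_space.dim (\<lambda>c f r. c * f r) (M ` I)"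

end

theory Submission
  imports Defs "HOL-Library.Multiset"
begin

text \<open>A basis vector \<open>(\<alpha>, \<rho>)\<close> with \<open>\<sigma> \<not>\<subseteq> \<rho>\<close> is killed by \<open>q\<^sub>\<ell>\<close>; otherwise its image is the
  0/1 vector supported on \<open>L_set \<alpha> (\<rho> - \<sigma>)\<close>. These supports are nonempty (distribute
  \<open>\<rho> - \<sigma>\<close> over the rows according to \<open>\<alpha>\<close>) and pairwise disjoint, because a set \<open>L\<close>
  recovers \<open>\<alpha>\<close> as its row counts and \<open>\<rho> - \<sigma>\<close> as its set of columns. Vectors with
  disjoint nonempty supports are independent, so the rank is the number of pairs
  \<open>(\<alpha>, \<rho>)\<close> with \<open>\<sigma> \<subseteq> \<rho>\<close>: a multiset count times a subset count.\<close>

lemma sum_apply: "(\<Sum>s\<in>S. f s) x = (\<Sum>s\<in>S. f s x)"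
  by (induction S rule: infinite_finite_induct) auto

lemma col_rank_eq_card_if_private_rows:
  fixes M :: "'i \<Rightarrow> 'r \<Rightarrow> 'a::field"
  assumes "J \<subseteq> I" and zero: "\<And>i. i \<in> I - J \<Longrightarrow> M i = 0"
    and rows: "\<And>i. i \<in> J \<Longrightarrow> \<exists>r. M i r \<noteq> 0 \<and> (\<forall>j\<in>J. j \<noteq> i \<longrightarrow> M j r = 0)"
  shows "col_rank M I = card J"
proof -
  interpret V: vector_space "\<lambda>c (f::'r \<Rightarrow> 'a) r. c * f r"
    by unfold_locales (simp_all add: fun_eq_iff distrib_left distrib_right)
  have inj: "inj_on M J"
  proof
    fix i j assume "i \<in> J" "j \<in> J" "M i = M j"
    with rows show "i = j" by metis
  qed
  have "V.independent (M ` J)"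
    unfolding V.independent_explicit_finite_subsets
  proof (intro allI impI ballI)
    fix S u v
    assume S: "S \<subseteq> M ` J" "finite S" and sum0: "(\<Sum>w\<in>S. (\<lambda>r. u w * w r)) = 0" and "v \<in> S"
    then obtain i where i: "i \<in> J" "v = M i" by blast
    then obtain r where r: "M i r \<noteq> 0" "\<forall>j\<in>J. j \<noteq> i \<longrightarrow> M j r = 0" using rows by blast
    have others: "w r = 0" if "w \<in> S - {v}" for w
      using that S(1) i r by auto
    have "0 = (\<Sum>w\<in>S. u w * w r)"
      using fun_cong[OF sum0, of r] by (simp add: sum_apply)
    also have "\<dots> = u v * v r + (\<Sum>w\<in>S - {v}. u w * w r)"
      using S(2) \<open>v \<in> S\<close> by (rule sum.remove)
    also have "\<dots> = u v * v r"
      by (subst sum.neutral) (simp_all add: others)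
    finally show "u v = 0" using i r by simp
  qed
  moreover have "V.span (M ` I) = V.span (M ` J)"
  proof (rule subset_antisym)
    have "M ` I \<subseteq> insert 0 (M ` J)" using zero by auto
    then have "V.span (M ` I) \<subseteq> V.span (insert 0 (M ` J))" by (rule V.span_mono)
    then show "V.span (M ` I) \<subseteq> V.span (M ` J)" by simp
    show "V.span (M ` J) \<subseteq> V.span (M ` I)" using \<open>J \<subseteq> I\<close> by (intro V.span_mono) auto
  qed
  ultimately have "col_rank M I = card (M ` J)"
    unfolding col_rank_def by (metis V.dim_span V.dim_eq_card_independent)
  with inj show ?thesis by (simp add: card_image)
qed

definition multi_indices :: "'i set \<Rightarrow> nat \<Rightarrow> ('i \<Rightarrow> nat) set" where
  "multi_indices I l = {\<alpha>. (\<forall>i. \<alpha> i \<noteq> 0 \<longrightarrow> i \<in> I) \<and> sum \<alpha> I = l}"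

lemma size_eq_sum_count:
  assumes "finite I" "set_mset M \<subseteq> I"
  shows "size M = sum (count M) I"
proof -
  have "sum (count M) I = sum (count M) (set_mset M)"
    using assms by (intro sum.mono_neutral_right) (auto simp: not_in_iff)
  then show ?thesis by (simp add: size_multiset_overloaded_eq)
qed

lemma multi_indices_eq_count_image:
  assumes "finite I"
  shows "multi_indices I l = count ` multisets_of_size I l"
proof
  show "count ` multisets_of_size I l \<subseteq> multi_indices I l"
    using assms by (auto simp: multisets_of_size_def multi_indices_def size_eq_sum_count
        simp flip: not_in_iff)
  show "multi_indices I l \<subseteq> count ` multisets_of_size I l"
  proof
    fix \<alpha> assume \<alpha>: "\<alpha> \<in> multi_indices I l"
    then have "finite {i. \<alpha> i > 0}"
      using assms by (auto simp: multi_indices_def intro: finite_subset)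
    then have count: "count (Abs_multiset \<alpha>) = \<alpha>" by (rule count_Abs_multiset)
    then have "set_mset (Abs_multiset \<alpha>) \<subseteq> I"
      using \<alpha> by (auto simp: multi_indices_def simp flip: count_greater_zero_iff)
    with count \<alpha> assms have "Abs_multiset \<alpha> \<in> multisets_of_size I l"
      by (simp add: multisets_of_size_def multi_indices_def size_eq_sum_count)
    with count show "\<alpha> \<in> count ` multisets_of_size I l" by (metis image_eqI)
  qed
qed

lemma card_multi_indices:
  assumes "finite I"
  shows "card (multi_indices I l) = (card I + l - 1 choose l)"
proof -
  have "inj_on count (multisets_of_size I l)" by (auto intro: inj_onI simp: multiset_eq_iff)
  then show ?thesis
    using assms by (simp add: multi_indices_eq_count_image card_image card_multisets_of_size)
qed

lemma card_supersets:
  assumes "finite U" "\<sigma> \<subseteq> U"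
  shows "card {\<rho>. \<rho> \<subseteq> U \<and> card \<rho> = card \<sigma> + l \<and> \<sigma> \<subseteq> \<rho>} = (card U - card \<sigma> choose l)"
proof -
  have fin: "finite \<sigma>" "finite (U - \<sigma>)" using assms finite_subset by auto
  have "{\<rho>. \<rho> \<subseteq> U \<and> card \<rho> = card \<sigma> + l \<and> \<sigma> \<subseteq> \<rho>} = (\<lambda>\<tau>. \<tau> \<union> \<sigma>) ` {\<tau>. \<tau> \<subseteq> U - \<sigma> \<and> card \<tau> = l}"
  proof (intro equalityI subsetI)
    fix \<rho> assume \<rho>: "\<rho> \<in> {\<rho>. \<rho> \<subseteq> U \<and> card \<rho> = card \<sigma> + l \<and> \<sigma> \<subseteq> \<rho>}"
    then have "card (\<rho> - \<sigma>) = l" using fin assms(1) by (simp add: card_Diff_subset finite_subset)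
    moreover have "\<rho> = (\<rho> - \<sigma>) \<union> \<sigma>" using \<rho> by blast
    ultimately show "\<rho> \<in> (\<lambda>\<tau>. \<tau> \<union> \<sigma>) ` {\<tau>. \<tau> \<subseteq> U - \<sigma> \<and> card \<tau> = l}"
      using \<rho> by blast
  next
    fix \<rho> assume "\<rho> \<in> (\<lambda>\<tau>. \<tau> \<union> \<sigma>) ` {\<tau>. \<tau> \<subseteq> U - \<sigma> \<and> card \<tau> = l}"
    then obtain \<tau> where "\<tau> \<subseteq> U - \<sigma>" "card \<tau> = l" "\<rho> = \<tau> \<union> \<sigma>" by blast
    moreover have "card (\<tau> \<union> \<sigma>) = card \<tau> + card \<sigma>"
      using fin \<open>\<tau> \<subseteq> U - \<sigma>\<close> by (intro card_Un_disjoint) (auto intro: finite_subset)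
    ultimately show "\<rho> \<in> {\<rho>. \<rho> \<subseteq> U \<and> card \<rho> = card \<sigma> + l \<and> \<sigma> \<subseteq> \<rho>}"
      using assms(2) by auto
  qed
  moreover have "inj_on (\<lambda>\<tau>. \<tau> \<union> \<sigma>) {\<tau>. \<tau> \<subseteq> U - \<sigma> \<and> card \<tau> = l}"
    by (rule inj_onI) blast
  ultimately show ?thesis
    using fin assms by (simp add: card_image n_subsets card_Diff_subset)
qed

lemma L_set_determines_index:
  assumes "L \<in> L_set \<alpha> \<tau>" "L \<in> L_set \<alpha>' \<tau>'"
  shows "\<alpha> = \<alpha>' \<and> \<tau> = \<tau>'"
proof -
  have "\<tau> = snd ` L" if "L \<in> L_set \<alpha> \<tau>" for \<alpha> \<tau>
    using that unfolding L_set_def by force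
  moreover have "\<alpha> = (\<lambda>i. card {j. (i, j) \<in> L})" if "L \<in> L_set \<alpha> \<tau>" for \<alpha> \<tau>
    using that by (simp add: L_set_def fun_eq_iff)
  ultimately show ?thesis using assms by metis
qed

text \<open>Row \<open>i\<close> receives the elements of \<open>\<tau>\<close> sent into \<open>{i} \<times> {..<\<alpha> i}\<close> by a bijection
  of \<open>\<tau>\<close> onto \<open>SIGMA i:I. {..<\<alpha> i}\<close>.\<close>
lemma L_set_nonempty:
  assumes "finite I" "finite \<tau>" "\<alpha> \<in> multi_indices I (card \<tau>)"
  shows "L_set \<alpha> \<tau> \<noteq> {}"
proof -
  define P where "P = (SIGMA i:I. {..<\<alpha> i})"
  have "card P = card \<tau>"
    using assms by (simp add: P_def card_SigmaI multi_indices_def)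
  then obtain f where f: "bij_betw f \<tau> P"
    using assms(1,2) finite_same_card_bij[of \<tau> P] by (auto simp: P_def)
  have fP: "snd (f j) < \<alpha> (fst (f j))" if "j \<in> \<tau>" for j
    using bij_betwE[OF f] that by (auto simp: P_def)
  define L where "L = (\<lambda>j. (fst (f j), j)) ` \<tau>"
  have memL: "(r, j) \<in> L \<longleftrightarrow> j \<in> \<tau> \<and> r = fst (f j)" for r j
    by (auto simp: L_def)
  have "card {j. (i, j) \<in> L} = \<alpha> i" for i
  proof -
    have "f ` {j \<in> \<tau>. fst (f j) = i} \<subseteq> {i} \<times> {..<\<alpha> i}"
      using fP by (auto simp: image_subset_iff mem_Times_iff)
    moreover have "{i} \<times> {..<\<alpha> i} \<subseteq> f ` {j \<in> \<tau>. fst (f j) = i}"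
    proof
      fix p assume p: "p \<in> {i} \<times> {..<\<alpha> i}"
      then have "i \<in> I" using assms(3) by (auto simp: multi_indices_def)
      with p have "p \<in> f ` \<tau>" using bij_betw_imp_surj_on[OF f] by (auto simp: P_def)
      then obtain j where j: "j \<in> \<tau>" "p = f j" by blast
      with p have "fst (f j) = i" by auto
      with j show "p \<in> f ` {j \<in> \<tau>. fst (f j) = i}" by blast
    qed
    ultimately have image: "f ` {j \<in> \<tau>. fst (f j) = i} = {i} \<times> {..<\<alpha> i}" by (rule subset_antisym)
    have "inj_on f {j \<in> \<tau>. fst (f j) = i}"
      using bij_betw_imp_inj_on[OF f] by (rule inj_on_subset) auto
    from card_image[OF this] have "card {j \<in> \<tau>. fst (f j) = i} = \<alpha> i"
      by (simp add: image)
    moreover have "{j. (i, j) \<in> L} = {j \<in> \<tau>. fst (f j) = i}" using memL by auto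
    ultimately show ?thesis by simp
  qed
  moreover have "\<alpha> (fst p) \<noteq> 0" if "p \<in> L" for p
    using that fP by (fastforce simp: L_def)
  moreover have "snd ` L \<subseteq> \<tau>" "\<forall>j\<in>\<tau>. \<exists>!r. (r, j) \<in> L"
    using memL by auto
  ultimately have "L \<in> L_set \<alpha> \<tau>" by (simp add: L_set_def)
  then show ?thesis by blast
qed

lemma q_col_private_row:
  assumes "finite I" "finite \<rho>" "\<sigma> \<subseteq> \<rho>" "\<alpha> \<in> multi_indices I (card (\<rho> - \<sigma>))"
    and "\<forall>c\<in>C. \<sigma> \<subseteq> snd c"
  shows "\<exists>L. q_col \<sigma> (\<alpha>, \<rho>) L \<noteq> (0::'a::field)
           \<and> (\<forall>c\<in>C. c \<noteq> (\<alpha>, \<rho>) \<longrightarrow> q_col \<sigma> c L = (0::'a))"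
proof -
  obtain L where L: "L \<in> L_set \<alpha> (\<rho> - \<sigma>)"
    using L_set_nonempty[of I "\<rho> - \<sigma>" \<alpha>] assms by blast
  have others: "q_col \<sigma> c L = (0::'a)" if "c \<in> C" "c \<noteq> (\<alpha>, \<rho>)" for c
  proof (rule ccontr)
    assume "q_col \<sigma> c L \<noteq> (0::'a)"
    then have "L \<in> L_set (fst c) (snd c - \<sigma>)" by (simp add: q_col_def split: if_splits)
    with L have "fst c = \<alpha>" "snd c - \<sigma> = \<rho> - \<sigma>" using L_set_determines_index by metis+
    with that assms(3,5) show False by (auto simp: prod_eq_iff)
  qed
  have "q_col \<sigma> (\<alpha>, \<rho>) L = (1::'a)" using L assms(3) by (simp add: q_col_def)
  with others show ?thesis by (intro exI[of _ L]) simp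
qed

lemma dom_index_eq:
  "dom_index n m l = multi_indices {1..n} l \<times> {\<rho>. \<rho> \<subseteq> {1..m} \<and> card \<rho> = n + l}"
  by (auto simp: dom_index_def multi_indices_def)

theorem lemma4p13:
  fixes n m l :: nat and \<sigma> :: "nat set"
  assumes "n \<le> m" and "\<sigma> \<subseteq> {1..m}" and "card \<sigma> = n" and "l \<ge> 1"
  shows "col_rank (q_col \<sigma> :: _ \<Rightarrow> _ \<Rightarrow> 'a::field) (dom_index n m l)
           = (n + l - 1 choose l) * (m - n choose l)"
proof -
  define A where "A = multi_indices {1..n} l"
  define R where "R = {\<rho>. \<rho> \<subseteq> {1..m} \<and> card \<rho> = card \<sigma> + l \<and> \<sigma> \<subseteq> \<rho>}"
  have "col_rank (q_col \<sigma> :: _ \<Rightarrow> _ \<Rightarrow> 'a) (dom_index n m l) = card (A \<times> R)"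
  proof (rule col_rank_eq_card_if_private_rows)
    show "A \<times> R \<subseteq> dom_index n m l"
      using assms(3) by (auto simp: dom_index_eq A_def R_def)
    show "q_col \<sigma> c = 0" if "c \<in> dom_index n m l - A \<times> R" for c
    proof -
      have "\<not> \<sigma> \<subseteq> snd c" using that assms(3) by (auto simp: dom_index_eq A_def R_def)
      then show ?thesis by (simp add: q_col_def fun_eq_iff)
    qed
    show "\<exists>L. q_col \<sigma> c L \<noteq> (0::'a) \<and> (\<forall>c'\<in>A \<times> R. c' \<noteq> c \<longrightarrow> q_col \<sigma> c' L = (0::'a))"
      if c_in: "c \<in> A \<times> R" for c
    proof -
      obtain \<alpha> \<rho> where c: "c = (\<alpha>, \<rho>)" "\<alpha> \<in> A" "\<rho> \<in> R"
        using c_in by blast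
      then have "finite \<rho>" "\<sigma> \<subseteq> \<rho>" "card (\<rho> - \<sigma>) = l"
        by (auto simp: R_def card_Diff_subset finite_subset)
      with c show ?thesis
        unfolding c(1) by (intro q_col_private_row[of "{1..n}"]) (auto simp: A_def R_def)
    qed
  qed
  also have "\<dots> = (n + l - 1 choose l) * (m - n choose l)"
    using card_supersets[of "{1..m}" \<sigma> l] assms(2,3)
    by (simp add: A_def R_def card_cartesian_product card_multi_indices)
  finally show ?thesis .
qed

end
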